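(* Let $d\ge3$, $\Lambda\subset\mathbb R^d$ bounded, $\beta>0$, $0<z\le1$, $\varepsilon\in\{+1,-1\}$, and $U:\mathbb R^d\to[0,\infty)$ integrable with $U(-x)=U(x)$. Let $\mathbb A$ be the set of triples $\boldsymbol\omega=(\ell,x,\omega)$ with $\ell\ge1$ an integer, $x\in\Lambda$, and $\omega:[0,\ell\beta]\to\mathbb R^d$ a continuous path with $\omega(0)=\omega(\ell\beta)=x$, equipped with the complex measure $$d\mu(\boldsymbol\omega)=\frac{z^\ell\varepsilon^{\ell+1}}{\ell}\,dx\,dW^{\ell\beta}_{xx}(\omega)\,\chi_\Lambda(\omega)\prod_{0\le m<n\le\ell-1}\exp\Big\{-\int_0^\beta U\big(\omega(m\beta+t)-\omega(n\beta+t)\big)dt\Big\},$$ and let $$\zeta(\boldsymbol\omega,\boldsymbol\omega')=\exp\Big\{-\sum_{m=0}^{\ell-1}\sum_{n=0}^{\ell'-1}\int_0^\beta U\big(\omega(m\beta+t)-\omega'(n\beta+t)\big)dt\Big\}-1.$$ If $$\frac{\beta}{(2\pi\beta)^{d/2}}\int_{\mathbb R^d}U(x)\,dx\sum_{\ell\ge1}\ell^{-d/2}\le-\log z,$$ then $a(\boldsymbol\omega)=(-\log z)\ell$ satisfies, for all $\boldsymbol\omega=(\ell,x,\omega)\in\mathbb A$, $$\int d|\mu|(\boldsymbol\omega')\,|\zeta(\boldsymbol\omega,\boldsymbol\omega')|\,e^{a(\boldsymbol\omega')}\le a(\boldsymbol\omega).$$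
   Context: $\chi_\Lambda(\omega)=1$ if $\omega(t)\in\Lambda$ for all $t$ in the domain of $\omega$, and $0$ otherwise. $W^{T}_{xy}$ denotes the (unnormalized) Wiener measure on continuous paths $\omega:[0,T]\to\mathbb R^d$ from $x$ to $y$: for $0<t_1<\dots<t_n<T$ and $f:\mathbb R^{nd}\to\mathbb R$, $$\int dW^T_{xy}(\omega)f(\omega(t_1),\dots,\omega(t_n))=\int dx_1\cdots\int dx_n\,\psi_{t_1}(x_1-x)\psi_{t_2-t_1}(x_2-x_1)\cdots\psi_{T-t_n}(y-x_n)f(x_1,\dots,x_n),$$ with $\psi_t(x)=(2\pi t)^{-d/2}e^{-x^2/2t}$. $|\mu|$ is the total variation of $\mu$. *)

theory Defs
  imports "HOL-Analysis.Analysis"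
begin

definition heat_kernel :: "real \<Rightarrow> 'a::euclidean_space \<Rightarrow> real" where
  "heat_kernel t x = (2 * pi * t) powr (- real DIM('a) / 2) * exp (- ((norm x) ^ 2) / (2 * t))"

text \<open>Continuous paths on [0,T] from x to y, extended constantly outside [0,T]
  (canonical representatives of paths omega : [0,T] -> R^d).\<close>
definition cpaths :: "real \<Rightarrow> 'a::euclidean_space \<Rightarrow> 'a \<Rightarrow> (real \<Rightarrow> 'a) set" where
  "cpaths T x y = {\<omega>. continuous_on {0..T} \<omega> \<and> \<omega> 0 = x \<and> \<omega> T = y
                      \<and> (\<forall>t<0. \<omega> t = x) \<and> (\<forall>t>T. \<omega> t = y)}"

text \<open>Finite-dimensional distributions of the unnormalized Wiener measure W^T_{xy}
  evaluated on cylinder sets: the list contains (t_i, B_i) with s < t_1 < ... < t_n < T,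
  and the value is the iterated heat-kernel integral of prod_i indicator B_i (x_i).\<close>
fun bb_fd :: "real \<Rightarrow> real \<Rightarrow> 'a::euclidean_space \<Rightarrow> 'a \<Rightarrow> (real \<times> 'a set) list \<Rightarrow> ennreal" where
  "bb_fd T s x y [] = ennreal (heat_kernel (T - s) (y - x))"
| "bb_fd T s x y ((t, B) # rest) =
     (\<integral>\<^sup>+ x1. ennreal (heat_kernel (t - s) (x1 - x)) * indicator B x1 * bb_fd T t x1 y rest \<partial>lborel)"

definition is_wiener_family :: "(real \<Rightarrow> 'a::euclidean_space \<Rightarrow> 'a \<Rightarrow> (real \<Rightarrow> 'a) measure) \<Rightarrow> bool" where
  "is_wiener_family W \<longleftrightarrow>
    (\<forall>T>0. \<forall>x y.
       space (W T x y) = cpaths T x y \<and>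
       sets (W T x y) = sigma_sets (cpaths T x y)
                          {{\<omega> \<in> cpaths T x y. \<omega> t \<in> B} | t B. B \<in> sets borel} \<and>
       (\<forall>tbs. sorted_wrt (<) (map fst tbs) \<longrightarrow>
              (\<forall>(t, B) \<in> set tbs. 0 < t \<and> t < T \<and> B \<in> sets borel) \<longrightarrow>
              emeasure (W T x y) {\<omega> \<in> cpaths T x y. \<forall>(t, B) \<in> set tbs. \<omega> t \<in> B}
                = bb_fd T 0 x y tbs))"

definition chi :: "'a set \<Rightarrow> real \<Rightarrow> (real \<Rightarrow> 'a) \<Rightarrow> real" where
  "chi \<Lambda> T \<omega> = (if \<forall>t\<in>{0..T}. \<omega> t \<in> \<Lambda> then 1 else 0)"

definition pair_int :: "real \<Rightarrow> ('a::euclidean_space \<Rightarrow> real) \<Rightarrow> (real \<Rightarrow> 'a) \<Rightarrow> (real \<Rightarrow> 'a) \<Rightarrow> nat \<Rightarrow> nat \<Rightarrow> ennreal" where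
  "pair_int \<beta> U \<omega> \<omega>' m n = (\<integral>\<^sup>+ t\<in>{0..\<beta>}. ennreal (U (\<omega> (real m * \<beta> + t) - \<omega>' (real n * \<beta> + t))) \<partial>lborel)"

definition expneg :: "ennreal \<Rightarrow> real" where
  "expneg v = (if v = \<infinity> then 0 else exp (- enn2real v))"

definition self_factor :: "real \<Rightarrow> ('a::euclidean_space \<Rightarrow> real) \<Rightarrow> nat \<Rightarrow> (real \<Rightarrow> 'a) \<Rightarrow> real" where
  "self_factor \<beta> U l \<omega> = (\<Prod>m<l. \<Prod>n\<in>{m<..<l}. expneg (pair_int \<beta> U \<omega> \<omega> m n))"

definition zeta :: "real \<Rightarrow> ('a::euclidean_space \<Rightarrow> real) \<Rightarrow> nat \<Rightarrow> (real \<Rightarrow> 'a) \<Rightarrow> nat \<Rightarrow> (real \<Rightarrow> 'a) \<Rightarrow> real" where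
  "zeta \<beta> U l \<omega> l' \<omega>' = expneg (\<Sum>m<l. \<Sum>n<l'. pair_int \<beta> U \<omega> \<omega>' m n) - 1"

end

theory Submission
  imports Defs "HOL-Probability.Probability"
begin

text \<open>Since |exp(-v) - 1| <= v and every factor of |mu| other than z^l'/l' lies in [0,1], the
  weight e^a cancels z^l', so the l'-th term is at most 1/l' times the sum over the l l' pairs
  (m, n) of the pair interaction integrated against the free loop measure dx' W_{x'x'}.
  At time s = n beta + t the bridge from x' to x' of length T = l' beta has density
  psi_s(x1 - x') psi_{T-s}(x' - x1) in x1, and integrating over the starting point x'
  (Chapman-Kolmogorov) leaves psi_T(0) = (2 pi l' beta)^(-d/2) times Lebesgue measure. Each pair
  thus contributes beta psi_T(0) int U, the l'-th term is at most
  l beta (2 pi beta)^(-d/2) l'^(-d/2) int U,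
  and the hypothesis bounds the sum over l' by l (-log z).\<close>

section \<open>The heat kernel\<close>

lemma heat_kernel_nonneg: "heat_kernel t x \<ge> 0"
  unfolding heat_kernel_def by simp

lemma heat_kernel_measurable[measurable (raw)]:
  "f \<in> borel_measurable M \<Longrightarrow> g \<in> borel_measurable M \<Longrightarrow>
    (\<lambda>x. heat_kernel (f x) (g x)) \<in> borel_measurable M"
  unfolding heat_kernel_def
  by (intro borel_measurable_times powr_real_measurable)
    (auto intro!: borel_measurable_times borel_measurable_divide)

lemma heat_kernel_zero: "heat_kernel t (0::'a::euclidean_space) = (2 * pi * t) powr (- real DIM('a) / 2)"
  by (simp add: heat_kernel_def)

lemma heat_kernel_eq_prod_normal_density:
  fixes x :: "'a::euclidean_space"
  assumes t: "t > 0"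
  shows "heat_kernel t x = (\<Prod>b\<in>Basis. normal_density 0 (sqrt t) (x \<bullet> b))"
proof -
  have "normal_density 0 (sqrt t) r = (2 * pi * t) powr (-1/2) * exp (- r\<^sup>2 / (2 * t))" for r
    using t by (simp add: normal_density_def powr_minus_divide powr_half_sqrt)
  then have "(\<Prod>b\<in>Basis. normal_density 0 (sqrt t) (x \<bullet> b))
      = ((2 * pi * t) powr (-1/2)) ^ DIM('a) * exp (\<Sum>b\<in>Basis. - (x \<bullet> b)\<^sup>2 / (2 * t))"
    by (simp add: prod.distrib exp_sum)
  also have "((2 * pi * t) powr (-1/2)) ^ DIM('a) = (2 * pi * t) powr (- real DIM('a) / 2)"
    using t by (simp add: powr_power)
  also have "(\<Sum>b\<in>Basis. - (x \<bullet> b)\<^sup>2 / (2 * t)) = - (norm x)\<^sup>2 / (2 * t)"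
  proof -
    have "(norm x)\<^sup>2 = (\<Sum>b\<in>Basis. (x \<bullet> b)\<^sup>2)"
      unfolding power2_norm_eq_inner by (subst euclidean_inner) (simp add: power2_eq_square)
    then show ?thesis
      by (simp add: sum_divide_distrib[symmetric] sum_negf)
  qed
  finally show ?thesis
    by (simp add: heat_kernel_def)
qed

lemma nn_integral_heat_kernel:
  assumes "t > 0"
  shows "(\<integral>\<^sup>+x. ennreal (heat_kernel t (x::'a::euclidean_space)) \<partial>lborel) = 1"
proof -
  have "(\<integral>\<^sup>+x. ennreal (heat_kernel t (x::'a)) \<partial>lborel)
      = (\<integral>\<^sup>+(x::'a). (\<Prod>b\<in>Basis. ennreal (normal_density 0 (sqrt t) (x \<bullet> b))) \<partial>lborel)"
    using assms by (simp add: heat_kernel_eq_prod_normal_density prod_ennreal)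
  also have "\<dots> = (\<Prod>b\<in>(Basis::'a set). \<integral>\<^sup>+r. ennreal (normal_density 0 (sqrt t) r) \<partial>lborel)"
    by (rule nn_integral_lborel_prod) auto
  also have "\<dots> = 1"
    using assms by (simp add: nn_integral_eq_integral)
  finally show ?thesis .
qed

lemma heat_kernel_mult_same_point:
  fixes v :: "'a::euclidean_space"
  assumes s: "s > 0" and r: "r > 0"
  shows "heat_kernel s v * heat_kernel r v = heat_kernel (s + r) (0::'a) * heat_kernel (s * r / (s + r)) v"
proof -
  define \<sigma> where "\<sigma> = s * r / (s + r)"
  define e where "e = - real DIM('a) / 2"
  have "(2 * pi * s) powr e * (2 * pi * r) powr e = ((2 * pi * s) * (2 * pi * r)) powr e"
    by (rule powr_mult[symmetric])
  also have "(2 * pi * s) * (2 * pi * r) = (2 * pi * (s + r)) * (2 * pi * \<sigma>)"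
    using s r by (simp add: \<sigma>_def field_simps)
  also have "((2 * pi * (s + r)) * (2 * pi * \<sigma>)) powr e = (2 * pi * (s + r)) powr e * (2 * pi * \<sigma>) powr e"
    by (rule powr_mult)
  finally have prefactor: "(2 * pi * s) powr e * (2 * pi * r) powr e = (2 * pi * (s + r)) powr e * (2 * pi * \<sigma>) powr e" .
  have gaussian: "exp (- (norm v)\<^sup>2 / (2 * s)) * exp (- (norm v)\<^sup>2 / (2 * r)) = exp (- (norm v)\<^sup>2 / (2 * \<sigma>))"
    using s r by (simp add: \<sigma>_def exp_add[symmetric] field_simps)
  have "heat_kernel s v * heat_kernel r v
      = ((2 * pi * s) powr e * (2 * pi * r) powr e) * (exp (- (norm v)\<^sup>2 / (2 * s)) * exp (- (norm v)\<^sup>2 / (2 * r)))"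
    by (simp add: heat_kernel_def e_def mult_ac)
  also have "\<dots> = heat_kernel (s + r) (0::'a) * heat_kernel \<sigma> v"
    unfolding prefactor gaussian by (simp add: heat_kernel_def e_def mult_ac)
  finally show ?thesis
    unfolding \<sigma>_def .
qed

lemma nn_integral_lborel_reflect:
  fixes f :: "'a::euclidean_space \<Rightarrow> ennreal"
  assumes [measurable]: "f \<in> borel_measurable borel"
  shows "(\<integral>\<^sup>+x. f x \<partial>lborel) = (\<integral>\<^sup>+x. f (a - x) \<partial>lborel)"
proof -
  have "(lborel :: 'a measure) = density (distr lborel borel (\<lambda>x. a + (-1) *\<^sub>R x)) (\<lambda>_. \<bar>-1::real\<bar> ^ DIM('a))"
    by (rule lborel_affine) simp
  then have "(\<integral>\<^sup>+x. f x \<partial>lborel)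
      = (\<integral>\<^sup>+x. f x \<partial>density (distr lborel borel (\<lambda>x. a + (-1) *\<^sub>R x)) (\<lambda>_. \<bar>-1::real\<bar> ^ DIM('a)))"
    by simp
  then show ?thesis
    by (simp add: nn_integral_density nn_integral_distr)
qed

lemma nn_integral_heat_kernel_product:
  fixes x :: "'a::euclidean_space"
  assumes s: "s > 0" and r: "r > 0"
  shows "(\<integral>\<^sup>+y. ennreal (heat_kernel s (x - y) * heat_kernel r (y - x)) \<partial>lborel) = ennreal (heat_kernel (s + r) (0::'a))"
proof -
  define \<sigma> where "\<sigma> = s * r / (s + r)"
  have "heat_kernel s (x - y) * heat_kernel r (y - x) = heat_kernel (s + r) (0::'a) * heat_kernel \<sigma> (x - y)" for y
    using heat_kernel_mult_same_point[OF s r, of "x - y"]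
    by (simp add: \<sigma>_def heat_kernel_def norm_minus_commute)
  then have "(\<integral>\<^sup>+y. ennreal (heat_kernel s (x - y) * heat_kernel r (y - x)) \<partial>lborel)
      = (\<integral>\<^sup>+y. ennreal (heat_kernel (s + r) (0::'a)) * ennreal (heat_kernel \<sigma> (x - y)) \<partial>lborel)"
    by (simp add: ennreal_mult[symmetric] heat_kernel_nonneg)
  also have "\<dots> = ennreal (heat_kernel (s + r) (0::'a)) * (\<integral>\<^sup>+y. ennreal (heat_kernel \<sigma> (x - y)) \<partial>lborel)"
    by (rule nn_integral_cmult) measurable
  also have "(\<integral>\<^sup>+y. ennreal (heat_kernel \<sigma> (x - y)) \<partial>lborel) = 1"
    using nn_integral_lborel_reflect[of "\<lambda>y. ennreal (heat_kernel \<sigma> y)" x] s r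
    by (simp add: nn_integral_heat_kernel \<sigma>_def)
  finally show ?thesis
    by simp
qed

lemma nn_integral_heat_kernel_loop:
  fixes g :: "'a::euclidean_space \<Rightarrow> ennreal"
  assumes s: "s > 0" and r: "r > 0" and [measurable]: "g \<in> borel_measurable borel"
  shows "(\<integral>\<^sup>+x. (\<integral>\<^sup>+y. ennreal (heat_kernel s (y - x) * heat_kernel r (x - y)) * g y \<partial>lborel) \<partial>lborel)
    = ennreal (heat_kernel (s + r) (0::'a)) * (\<integral>\<^sup>+y. g y \<partial>lborel)"
proof -
  have "(\<integral>\<^sup>+x. (\<integral>\<^sup>+y. ennreal (heat_kernel s (y - x) * heat_kernel r (x - y)) * g y \<partial>lborel) \<partial>lborel)
      = (\<integral>\<^sup>+y. (\<integral>\<^sup>+x. ennreal (heat_kernel s (y - x) * heat_kernel r (x - y)) \<partial>lborel) * g y \<partial>lborel)"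
    by (subst lborel_pair.Fubini') (auto intro!: nn_integral_cong nn_integral_multc)
  also have "\<dots> = (\<integral>\<^sup>+y. ennreal (heat_kernel (s + r) (0::'a)) * g y \<partial>lborel)"
  proof -
    have "(\<integral>\<^sup>+x. ennreal (heat_kernel s (y - x) * heat_kernel r (x - y)) \<partial>lborel) = ennreal (heat_kernel (s + r) (0::'a))" for y :: 'a
      by (rule nn_integral_heat_kernel_product[OF s r])
    then show ?thesis by simp
  qed
  also have "\<dots> = ennreal (heat_kernel (s + r) (0::'a)) * (\<integral>\<^sup>+y. g y \<partial>lborel)"
    by (rule nn_integral_cmult) measurable
  finally show ?thesis .
qed

section \<open>Wiener bridge measures\<close>

lemma cpaths_continuous:
  assumes "\<omega> \<in> cpaths T x y" and "T \<ge> 0"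
  shows "continuous_on UNIV \<omega>"
proof -
  have clamp: "\<omega> = (\<lambda>t. \<omega> (max 0 (min T t)))"
  proof
    fix t show "\<omega> t = \<omega> (max 0 (min T t))"
      using assms unfolding cpaths_def
      by (cases "t < 0"; cases "t > T") (auto simp: max_def min_def)
  qed
  have "continuous_on {0..T} \<omega>"
    using assms unfolding cpaths_def by auto
  then have "continuous_on UNIV (\<lambda>t. \<omega> (max 0 (min T t)))"
    by (rule continuous_on_compose2) (use assms(2) in \<open>auto intro!: continuous_intros\<close>)
  then show ?thesis
    using clamp by metis
qed

lemma space_wiener: "is_wiener_family W \<Longrightarrow> T > 0 \<Longrightarrow> space (W T x y) = cpaths T x y"
  unfolding is_wiener_family_def by auto

lemma emeasure_wiener_cylinder:
  assumes "is_wiener_family W" and "T > 0"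
    and "sorted_wrt (<) (map fst tbs)" and "\<forall>(t, B) \<in> set tbs. 0 < t \<and> t < T \<and> B \<in> sets borel"
  shows "emeasure (W T x y) {\<omega> \<in> cpaths T x y. \<forall>(t, B) \<in> set tbs. \<omega> t \<in> B} = bb_fd T 0 x y tbs"
  using assms unfolding is_wiener_family_def by blast

lemma emeasure_wiener_space:
  assumes W: "is_wiener_family W" and T: "T > 0"
  shows "emeasure (W T x y) (space (W T x y)) = ennreal (heat_kernel T (y - x))"
  using emeasure_wiener_cylinder[OF W T, of "[]" x y] by (simp add: space_wiener[OF W T])

lemma finite_measure_wiener: "is_wiener_family W \<Longrightarrow> T > 0 \<Longrightarrow> finite_measure (W T x y)"
  by (rule finite_measureI) (simp add: emeasure_wiener_space)

lemma measurable_wiener_eval: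
  assumes W: "is_wiener_family W" and T: "T > 0"
  shows "(\<lambda>\<omega>. \<omega> r) \<in> borel_measurable (W T x y)"
proof (rule measurableI)
  fix A :: "'a set" assume "A \<in> sets borel"
  then have "{\<omega> \<in> cpaths T x y. \<omega> r \<in> A} \<in> sets (W T x y)"
    using W T unfolding is_wiener_family_def by (auto intro!: sigma_sets.Basic)
  moreover have "(\<lambda>\<omega>. \<omega> r) -` A \<inter> space (W T x y) = {\<omega> \<in> cpaths T x y. \<omega> r \<in> A}"
    using space_wiener[OF W T] by auto
  ultimately show "(\<lambda>\<omega>. \<omega> r) -` A \<inter> space (W T x y) \<in> sets (W T x y)"
    by simp
qed auto

lemma distr_wiener_eval:
  assumes W: "is_wiener_family W" and s: "0 < s" "s < T"
  shows "distr (W T x y) borel (\<lambda>\<omega>. \<omega> s) =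
    density lborel (\<lambda>x1. ennreal (heat_kernel s (x1 - x) * heat_kernel (T - s) (y - x1)))"
proof (rule measure_eqI)
  have T: "T > 0" using s by auto
  fix A :: "'a set" assume "A \<in> sets (distr (W T x y) borel (\<lambda>\<omega>. \<omega> s))"
  then have A: "A \<in> sets borel" by simp
  have "(\<lambda>\<omega>. \<omega> s) -` A \<inter> space (W T x y) = {\<omega> \<in> cpaths T x y. \<forall>(t, B) \<in> set [(s, A)]. \<omega> t \<in> B}"
    using space_wiener[OF W T] by auto
  then have "emeasure (distr (W T x y) borel (\<lambda>\<omega>. \<omega> s)) A = bb_fd T 0 x y [(s, A)]"
    using emeasure_wiener_cylinder[OF W T, of "[(s, A)]"] s A
    by (simp add: emeasure_distr[OF measurable_wiener_eval[OF W T] A])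
  also have "\<dots> = (\<integral>\<^sup>+x1. ennreal (heat_kernel s (x1 - x) * heat_kernel (T - s) (y - x1)) * indicator A x1 \<partial>lborel)"
    by (auto intro!: nn_integral_cong simp: ennreal_mult heat_kernel_nonneg mult_ac)
  finally show "emeasure (distr (W T x y) borel (\<lambda>\<omega>. \<omega> s)) A =
      emeasure (density lborel (\<lambda>x1. ennreal (heat_kernel s (x1 - x) * heat_kernel (T - s) (y - x1)))) A"
    using A by (simp add: emeasure_density)
qed simp

lemma nn_integral_wiener_eval:
  assumes W: "is_wiener_family W" and s: "0 < s" "s < T" and g[measurable]: "g \<in> borel_measurable borel"
  shows "(\<integral>\<^sup>+\<omega>. g (\<omega> s) \<partial>W T x y) =
    (\<integral>\<^sup>+x1. ennreal (heat_kernel s (x1 - x) * heat_kernel (T - s) (y - x1)) * g x1 \<partial>lborel)"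
proof -
  have "(\<integral>\<^sup>+\<omega>. g (\<omega> s) \<partial>W T x y) = (\<integral>\<^sup>+x1. g x1 \<partial>distr (W T x y) borel (\<lambda>\<omega>. \<omega> s))"
    using s by (intro nn_integral_distr[symmetric] measurable_wiener_eval[OF W]) auto
  then show ?thesis
    by (simp add: distr_wiener_eval[OF W s] nn_integral_density)
qed

lemma LIMSEQ_floor_mult_divide: "(\<lambda>j. real_of_int \<lfloor>real (Suc j) * t\<rfloor> / real (Suc j)) \<longlonglongrightarrow> t"
proof (rule tendsto_sandwich[where f="\<lambda>j. t - 1 / real (Suc j)" and h="\<lambda>j. t"])
  have "t - 1 / real (Suc j) \<le> real_of_int \<lfloor>real (Suc j) * t\<rfloor> / real (Suc j)" for j
  proof -
    have "t - 1 / real (Suc j) = (real (Suc j) * t - 1) / real (Suc j)"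
      by (simp add: field_simps)
    also have "\<dots> \<le> real_of_int \<lfloor>real (Suc j) * t\<rfloor> / real (Suc j)"
      by (rule divide_right_mono) linarith+
    finally show ?thesis .
  qed
  moreover have "real_of_int \<lfloor>real (Suc j) * t\<rfloor> / real (Suc j) \<le> t" for j
    using divide_right_mono[of "real_of_int \<lfloor>real (Suc j) * t\<rfloor>" "real (Suc j) * t" "real (Suc j)"]
    by simp
  ultimately show "\<forall>\<^sub>F j in sequentially. t - 1 / real (Suc j) \<le> real_of_int \<lfloor>real (Suc j) * t\<rfloor> / real (Suc j)"
    and "\<forall>\<^sub>F j in sequentially. real_of_int \<lfloor>real (Suc j) * t\<rfloor> / real (Suc j) \<le> t"
    by simp_all
  show "(\<lambda>j. t - 1 / real (Suc j)) \<longlonglongrightarrow> t"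
    using tendsto_diff[OF tendsto_const LIMSEQ_Suc[OF lim_inverse_n']] by (simp add: inverse_eq_divide)
qed simp

lemma measurable_wiener_shifted_eval:
  assumes W: "is_wiener_family W" and T: "T > 0"
  shows "(\<lambda>p. fst p (c + snd p)) \<in> borel_measurable (W T x y \<Otimes>\<^sub>M lborel)"
proof (rule borel_measurable_LIMSEQ_metric)
  fix j :: nat
  have "(\<lambda>p. (\<lambda>i::int. fst p (c + real_of_int i / real (Suc j))) \<lfloor>real (Suc j) * snd p\<rfloor>)
      \<in> borel_measurable (W T x y \<Otimes>\<^sub>M lborel)"
    by (rule measurable_compose_countable[OF measurable_compose[OF measurable_fst measurable_wiener_eval[OF W T]]])
      measurable
  then show "(\<lambda>p. fst p (c + real_of_int \<lfloor>real (Suc j) * snd p\<rfloor> / real (Suc j)))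
      \<in> borel_measurable (W T x y \<Otimes>\<^sub>M lborel)"
    by simp
next
  fix p :: "(real \<Rightarrow> 'a) \<times> real" assume "p \<in> space (W T x y \<Otimes>\<^sub>M lborel)"
  then have "fst p \<in> cpaths T x y"
    by (auto simp: space_pair_measure space_wiener[OF W T])
  then have "continuous_on UNIV (fst p)"
    using cpaths_continuous[of "fst p" T x y] T by simp
  moreover have "(\<lambda>j. c + real_of_int \<lfloor>real (Suc j) * snd p\<rfloor> / real (Suc j)) \<longlonglongrightarrow> c + snd p"
    by (intro tendsto_intros LIMSEQ_floor_mult_divide)
  ultimately show "(\<lambda>j. fst p (c + real_of_int \<lfloor>real (Suc j) * snd p\<rfloor> / real (Suc j))) \<longlonglongrightarrow> fst p (c + snd p)"
    using continuous_on_tendsto_compose by fastforce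
qed

section \<open>Pair interactions under the free loop measure\<close>

lemma slice_time_bounds:
  assumes "n < L" and "\<beta> > 0" and "0 < t" and "t < \<beta>"
  shows "0 < real n * \<beta> + t" and "real n * \<beta> + t < real L * \<beta>"
proof -
  have "real n * \<beta> + \<beta> \<le> real L * \<beta>"
    using assms mult_right_mono[of "real n + 1" "real L" \<beta>] by (simp add: algebra_simps)
  moreover have "0 \<le> real n * \<beta>"
    using assms by simp
  ultimately show "0 < real n * \<beta> + t" and "real n * \<beta> + t < real L * \<beta>"
    using assms by linarith+
qed

lemma measurable_pair_int:
  assumes W: "is_wiener_family W" and T: "T > 0"
    and [measurable]: "U \<in> borel_measurable borel" "\<omega> \<in> borel_measurable borel"
  shows "(\<lambda>\<omega>'. pair_int \<beta> U \<omega> \<omega>' m n) \<in> borel_measurable (W T x y)"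
proof -
  note measurable_wiener_shifted_eval[OF W T, of "real n * \<beta>", measurable]
  show ?thesis
    unfolding pair_int_def by measurable
qed

lemma nn_integral_wiener_pair_int:
  assumes W: "is_wiener_family W" and \<beta>: "\<beta> > 0" and n: "n < L"
    and [measurable]: "U \<in> borel_measurable borel" "\<omega> \<in> borel_measurable borel"
  defines "T \<equiv> real L * \<beta>"
  shows "(\<integral>\<^sup>+\<omega>'. pair_int \<beta> U \<omega> \<omega>' m n \<partial>W T x x) =
    (\<integral>\<^sup>+t\<in>{0<..<\<beta>}. (\<integral>\<^sup>+y. ennreal (heat_kernel (real n * \<beta> + t) (y - x)
        * heat_kernel (T - (real n * \<beta> + t)) (x - y)) * ennreal (U (\<omega> (real m * \<beta> + t) - y)) \<partial>lborel) \<partial>lborel)"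
    (is "_ = ?rhs")
proof -
  have T: "T > 0"
    using n \<beta> by (simp add: T_def)
  interpret W: finite_measure "W T x x"
    using finite_measure_wiener[OF W T] .
  interpret pair_sigma_finite "W T x x" lborel
    by (simp add: pair_sigma_finite_def W.sigma_finite_measure_axioms lborel.sigma_finite_measure_axioms)
  note measurable_wiener_shifted_eval[OF W T, of "real n * \<beta>", measurable]
    measurable_wiener_eval[OF W T, measurable]
  have "(\<integral>\<^sup>+\<omega>'. pair_int \<beta> U \<omega> \<omega>' m n \<partial>W T x x)
      = (\<integral>\<^sup>+t. (\<integral>\<^sup>+\<omega>'. ennreal (U (\<omega> (real m * \<beta> + t) - \<omega>' (real n * \<beta> + t))) * indicator {0..\<beta>} t \<partial>W T x x) \<partial>lborel)"
    unfolding pair_int_def by (rule Fubini'[symmetric]) measurable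
  also have "\<dots> = (\<integral>\<^sup>+t\<in>{0..\<beta>}. (\<integral>\<^sup>+\<omega>'. ennreal (U (\<omega> (real m * \<beta> + t) - \<omega>' (real n * \<beta> + t))) \<partial>W T x x) \<partial>lborel)"
    by (intro nn_integral_cong nn_integral_multc) measurable
  also have "\<dots> = ?rhs"
    \<comment> \<open>The endpoints t = 0 and t = beta are null; at t = beta the bridge time n beta + t may
      reach T, where the path is pinned and has no marginal density.\<close>
  proof (rule nn_integral_cong_AE)
    have "AE t in lborel. t \<noteq> 0" and "AE t in lborel. t \<noteq> \<beta>"
      by (rule AE_lborel_singleton)+
    then show "AE t in lborel.
        (\<integral>\<^sup>+\<omega>'. ennreal (U (\<omega> (real m * \<beta> + t) - \<omega>' (real n * \<beta> + t))) \<partial>W T x x) * indicator {0..\<beta>} t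
      = (\<integral>\<^sup>+y. ennreal (heat_kernel (real n * \<beta> + t) (y - x) * heat_kernel (T - (real n * \<beta> + t)) (x - y))
          * ennreal (U (\<omega> (real m * \<beta> + t) - y)) \<partial>lborel) * indicator {0<..<\<beta>} t"
    proof eventually_elim
      case (elim t)
      show ?case
      proof (cases "0 < t \<and> t < \<beta>")
        case True
        then have "0 < real n * \<beta> + t" "real n * \<beta> + t < T"
          using slice_time_bounds[OF n \<beta>] by (auto simp: T_def)
        from nn_integral_wiener_eval[OF W this, of "\<lambda>y. ennreal (U (\<omega> (real m * \<beta> + t) - y))"]
        show ?thesis
          using True by simp
      qed (use elim in auto)
    qed
  qed
  finally show ?thesis .
qed

lemma measurable_nn_integral_wiener_pair_int:
  fixes U :: "'a::euclidean_space \<Rightarrow> real" and \<omega> :: "real \<Rightarrow> 'a"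
  assumes W: "is_wiener_family W" and \<beta>: "\<beta> > 0" and n: "n < L"
    and [measurable]: "U \<in> borel_measurable borel" "\<omega> \<in> borel_measurable borel"
  shows "(\<lambda>x. \<integral>\<^sup>+\<omega>'. pair_int \<beta> U \<omega> \<omega>' m n \<partial>W (real L * \<beta>) x x) \<in> borel_measurable borel"
  by (simp only: nn_integral_wiener_pair_int[OF assms]) measurable

lemma nn_integral_loop_pair_int:
  fixes U :: "'a::euclidean_space \<Rightarrow> real" and \<omega> :: "real \<Rightarrow> 'a"
  assumes W: "is_wiener_family W" and \<beta>: "\<beta> > 0" and n: "n < L"
    and [measurable]: "U \<in> borel_measurable borel" "\<omega> \<in> borel_measurable borel"
  shows "(\<integral>\<^sup>+x. (\<integral>\<^sup>+\<omega>'. pair_int \<beta> U \<omega> \<omega>' m n \<partial>W (real L * \<beta>) x x) \<partial>lborel)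
    = ennreal (\<beta> * heat_kernel (real L * \<beta>) (0::'a)) * (\<integral>\<^sup>+y. ennreal (U y) \<partial>lborel)"
proof -
  define T where "T = real L * \<beta>"
  define H where "H t x = (\<integral>\<^sup>+y. ennreal (heat_kernel (real n * \<beta> + t) (y - x)
      * heat_kernel (T - (real n * \<beta> + t)) (x - y)) * ennreal (U (\<omega> (real m * \<beta> + t) - y)) \<partial>lborel)"
    for t and x :: 'a
  have [measurable]: "case_prod H \<in> borel_measurable (lborel \<Otimes>\<^sub>M lborel)"
    unfolding H_def by measurable
  have H_integral: "(\<integral>\<^sup>+x. H t x \<partial>lborel) = ennreal (heat_kernel T (0::'a)) * (\<integral>\<^sup>+y. ennreal (U y) \<partial>lborel)"
    if "t \<in> {0<..<\<beta>}" for t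
  proof -
    have "0 < real n * \<beta> + t" "0 < T - (real n * \<beta> + t)"
      using that slice_time_bounds[OF n \<beta>] by (auto simp: T_def)
    from nn_integral_heat_kernel_loop[OF this, of "\<lambda>y. ennreal (U (\<omega> (real m * \<beta> + t) - y))"]
    have "(\<integral>\<^sup>+x. H t x \<partial>lborel) = ennreal (heat_kernel T (0::'a)) * (\<integral>\<^sup>+y. ennreal (U (\<omega> (real m * \<beta> + t) - y)) \<partial>lborel)"
      by (simp add: H_def)
    also have "(\<integral>\<^sup>+y. ennreal (U (\<omega> (real m * \<beta> + t) - y)) \<partial>lborel) = (\<integral>\<^sup>+y. ennreal (U y) \<partial>lborel)"
      by (rule nn_integral_lborel_reflect[symmetric]) measurable
    finally show ?thesis .
  qed
  have "(\<integral>\<^sup>+x. (\<integral>\<^sup>+\<omega>'. pair_int \<beta> U \<omega> \<omega>' m n \<partial>W T x x) \<partial>lborel)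
      = (\<integral>\<^sup>+x. (\<integral>\<^sup>+t\<in>{0<..<\<beta>}. H t x \<partial>lborel) \<partial>lborel)"
    unfolding H_def T_def by (simp only: nn_integral_wiener_pair_int[OF assms])
  also have "\<dots> = (\<integral>\<^sup>+t\<in>{0<..<\<beta>}. (\<integral>\<^sup>+x. H t x \<partial>lborel) \<partial>lborel)"
    by (subst lborel_pair.Fubini') (auto intro!: nn_integral_cong nn_integral_multc)
  also have "\<dots> = (\<integral>\<^sup>+t. ennreal (heat_kernel T (0::'a)) * (\<integral>\<^sup>+y. ennreal (U y) \<partial>lborel) * indicator {0<..<\<beta>} t \<partial>lborel)"
    by (intro nn_integral_cong) (simp add: H_integral split: split_indicator)
  also have "\<dots> = ennreal (heat_kernel T (0::'a)) * (\<integral>\<^sup>+y. ennreal (U y) \<partial>lborel) * ennreal \<beta>"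
    using \<beta> by (simp add: nn_integral_cmult_indicator)
  finally show ?thesis
    using \<beta> by (simp add: T_def ennreal_mult heat_kernel_nonneg mult_ac)
qed

section \<open>Bounds on the polymer series\<close>

lemma expneg_bounds: "0 \<le> expneg v" "expneg v \<le> 1"
  unfolding expneg_def by (auto simp: enn2real_nonneg)

lemma abs_expneg_minus_one_le: "ennreal \<bar>expneg v - 1\<bar> \<le> v"
proof (cases "v = \<infinity>")
  case False
  then obtain r where r: "v = ennreal r" "r \<ge> 0"
    by (cases v) auto
  have "1 - r \<le> exp (- r)"
    using exp_ge_add_one_self[of "- r"] by simp
  moreover have "exp (- r) \<le> 1"
    using r by simp
  ultimately show ?thesis
    using r by (simp add: expneg_def ennreal_leI)
qed simp

lemma self_factor_bounds: "0 \<le> self_factor \<beta> U l \<omega>" "self_factor \<beta> U l \<omega> \<le> 1"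
  unfolding self_factor_def by (auto intro!: prod_nonneg prod_le_1 simp: expneg_bounds)

lemma chi_bounds: "0 \<le> chi \<Lambda> T \<omega>" "chi \<Lambda> T \<omega> \<le> 1"
  unfolding chi_def by auto

lemma polymer_weight_le:
  assumes z: "0 < z" and \<epsilon>: "\<epsilon> = 1 \<or> \<epsilon> = -1" and L: "L \<ge> 1"
  shows "ennreal (\<bar>z ^ L * \<epsilon> ^ (L + 1) / real L\<bar> * chi \<Lambda> T \<omega>' * self_factor \<beta> U L \<omega>'
            * \<bar>zeta \<beta> U l \<omega> L \<omega>'\<bar> * exp ((- ln z) * real L))
         \<le> ennreal (1 / real L) * (\<Sum>m<l. \<Sum>n<L. pair_int \<beta> U \<omega> \<omega>' m n)"
proof -
  have exp_weight: "exp ((- ln z) * real L) = 1 / z ^ L"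
    using z by (simp add: exp_minus exp_of_nat_mult inverse_eq_divide mult.commute)
  have abs_weight: "\<bar>z ^ L * \<epsilon> ^ (L + 1) / real L\<bar> = z ^ L / real L"
    using z \<epsilon> by (auto simp: abs_mult power_abs)
  have weight: "\<bar>z ^ L * \<epsilon> ^ (L + 1) / real L\<bar> * exp ((- ln z) * real L) = 1 / real L"
    unfolding exp_weight abs_weight using z by simp
  have "\<bar>z ^ L * \<epsilon> ^ (L + 1) / real L\<bar> * chi \<Lambda> T \<omega>' * self_factor \<beta> U L \<omega>'
        * \<bar>zeta \<beta> U l \<omega> L \<omega>'\<bar> * exp ((- ln z) * real L)
      = (\<bar>z ^ L * \<epsilon> ^ (L + 1) / real L\<bar> * exp ((- ln z) * real L))
        * (chi \<Lambda> T \<omega>' * self_factor \<beta> U L \<omega>') * \<bar>zeta \<beta> U l \<omega> L \<omega>'\<bar>"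
    by (simp add: mult_ac)
  also have "\<dots> = 1 / real L * (chi \<Lambda> T \<omega>' * self_factor \<beta> U L \<omega>') * \<bar>zeta \<beta> U l \<omega> L \<omega>'\<bar>"
    by (simp only: weight)
  also have "\<dots> \<le> 1 / real L * \<bar>zeta \<beta> U l \<omega> L \<omega>'\<bar>"
    using chi_bounds self_factor_bounds
    by (intro mult_right_mono mult_left_le mult_nonneg_nonneg mult_le_one) auto
  finally have "ennreal (\<bar>z ^ L * \<epsilon> ^ (L + 1) / real L\<bar> * chi \<Lambda> T \<omega>' * self_factor \<beta> U L \<omega>'
        * \<bar>zeta \<beta> U l \<omega> L \<omega>'\<bar> * exp ((- ln z) * real L))
      \<le> ennreal (1 / real L) * ennreal \<bar>zeta \<beta> U l \<omega> L \<omega>'\<bar>"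
    by (simp add: ennreal_mult[symmetric] ennreal_leI)
  also have "\<dots> \<le> ennreal (1 / real L) * (\<Sum>m<l. \<Sum>n<L. pair_int \<beta> U \<omega> \<omega>' m n)"
    unfolding zeta_def by (intro mult_left_mono abs_expneg_minus_one_le) auto
  finally show ?thesis .
qed

lemma nn_integral_double_sum:
  assumes "\<And>i j. i \<in> I \<Longrightarrow> j \<in> J \<Longrightarrow> f i j \<in> borel_measurable M"
  shows "(\<integral>\<^sup>+x. (\<Sum>i\<in>I. \<Sum>j\<in>J. f i j x) \<partial>M) = (\<Sum>i\<in>I. \<Sum>j\<in>J. \<integral>\<^sup>+x. f i j x \<partial>M)"
  using assms by (simp add: nn_integral_sum borel_measurable_sum cong: sum.cong)

lemma suminf_le_ennreal:
  assumes "\<And>k. a k \<le> ennreal (b k)" and "\<And>k. 0 \<le> b k" and "summable b"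
  shows "(\<Sum>k. a k) \<le> ennreal (\<Sum>k. b k)"
proof -
  have "(\<Sum>k. a k) \<le> (\<Sum>k. ennreal (b k))"
    using assms(1) by (intro suminf_le) auto
  also have "\<dots> = ennreal (\<Sum>k. b k)"
    using assms(2,3) by (rule suminf_ennreal2)
  finally show ?thesis .
qed

lemma polymer_term_le:
  fixes W :: "real \<Rightarrow> 'a::euclidean_space \<Rightarrow> 'a \<Rightarrow> (real \<Rightarrow> 'a) measure"
    and U :: "'a \<Rightarrow> real" and \<omega> :: "real \<Rightarrow> 'a"
  assumes W: "is_wiener_family W" and \<beta>: "\<beta> > 0" and z: "0 < z" and \<epsilon>: "\<epsilon> = 1 \<or> \<epsilon> = -1"
    and U: "U \<in> borel_measurable borel" and \<omega>: "\<omega> \<in> borel_measurable borel" and L: "L \<ge> 1"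
  shows "(\<integral>\<^sup>+x'. indicator \<Lambda> x' * (\<integral>\<^sup>+\<omega>'. ennreal (\<bar>z ^ L * \<epsilon> ^ (L + 1) / real L\<bar>
            * chi \<Lambda> (real L * \<beta>) \<omega>' * self_factor \<beta> U L \<omega>'
            * \<bar>zeta \<beta> U l \<omega> L \<omega>'\<bar> * exp ((- ln z) * real L)) \<partial>W (real L * \<beta>) x' x') \<partial>lborel)
     \<le> ennreal (real l * \<beta> * heat_kernel (real L * \<beta>) (0::'a)) * (\<integral>\<^sup>+y. ennreal (U y) \<partial>lborel)"
    (is "(\<integral>\<^sup>+x'. indicator \<Lambda> x' * (\<integral>\<^sup>+\<omega>'. ?F \<omega>' \<partial>W _ x' x') \<partial>lborel) \<le> _")
proof -
  define T where "T = real L * \<beta>"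
  define P where "P m n x' = (\<integral>\<^sup>+\<omega>'. pair_int \<beta> U \<omega> \<omega>' m n \<partial>W T x' x')" for m n x'
  define c where "c = ennreal (\<beta> * heat_kernel T (0::'a)) * (\<integral>\<^sup>+y. ennreal (U y) \<partial>lborel)"
  have T: "T > 0"
    using L \<beta> by (simp add: T_def)
  have P_integral: "(\<integral>\<^sup>+x'. P m n x' \<partial>lborel) = c" if "n < L" for m n
    unfolding P_def c_def T_def using nn_integral_loop_pair_int[OF W \<beta> that U \<omega>] .
  have "(\<integral>\<^sup>+x'. indicator \<Lambda> x' * (\<integral>\<^sup>+\<omega>'. ?F \<omega>' \<partial>W T x' x') \<partial>lborel)
      \<le> (\<integral>\<^sup>+x'. (\<integral>\<^sup>+\<omega>'. ennreal (1 / real L) * (\<Sum>m<l. \<Sum>n<L. pair_int \<beta> U \<omega> \<omega>' m n) \<partial>W T x' x') \<partial>lborel)"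
  proof (intro nn_integral_mono)
    fix x'
    have "indicator \<Lambda> x' * (\<integral>\<^sup>+\<omega>'. ?F \<omega>' \<partial>W T x' x') \<le> (\<integral>\<^sup>+\<omega>'. ?F \<omega>' \<partial>W T x' x')"
      by (simp split: split_indicator)
    also have "\<dots> \<le> (\<integral>\<^sup>+\<omega>'. ennreal (1 / real L) * (\<Sum>m<l. \<Sum>n<L. pair_int \<beta> U \<omega> \<omega>' m n) \<partial>W T x' x')"
      unfolding T_def by (intro nn_integral_mono polymer_weight_le[OF z \<epsilon> L])
    finally show "indicator \<Lambda> x' * (\<integral>\<^sup>+\<omega>'. ?F \<omega>' \<partial>W T x' x') \<le> \<dots>" .
  qed
  also have "\<dots> = (\<integral>\<^sup>+x'. ennreal (1 / real L) * (\<Sum>m<l. \<Sum>n<L. P m n x') \<partial>lborel)"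
    unfolding P_def using measurable_pair_int[OF W T U \<omega>]
    by (simp add: nn_integral_cmult nn_integral_double_sum borel_measurable_sum)
  also have "\<dots> = ennreal (1 / real L) * (\<Sum>m<l. \<Sum>n<L. \<integral>\<^sup>+x'. P m n x' \<partial>lborel)"
  proof -
    have meas: "P m n \<in> borel_measurable lborel" if "m \<in> {..<l}" "n \<in> {..<L}" for m n
      unfolding P_def T_def measurable_lborel2
      using that by (intro measurable_nn_integral_wiener_pair_int[OF W \<beta> _ U \<omega>]) auto
    then have "(\<integral>\<^sup>+x'. ennreal (1 / real L) * (\<Sum>m<l. \<Sum>n<L. P m n x') \<partial>lborel)
        = ennreal (1 / real L) * (\<integral>\<^sup>+x'. (\<Sum>m<l. \<Sum>n<L. P m n x') \<partial>lborel)"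
      by (intro nn_integral_cmult borel_measurable_sum) auto
    also have "\<dots> = ennreal (1 / real L) * (\<Sum>m<l. \<Sum>n<L. \<integral>\<^sup>+x'. P m n x' \<partial>lborel)"
      by (simp only: nn_integral_double_sum[where f = P, OF meas])
    finally show ?thesis .
  qed
  also have "\<dots> = ennreal (1 / real L) * (of_nat l * (of_nat L * c))"
    by (simp add: P_integral)
  also have "\<dots> = of_nat l * ((ennreal (1 / real L) * of_nat L) * c)"
    by (simp only: mult_ac)
  also have "ennreal (1 / real L) * of_nat L = 1"
    using L by (simp add: ennreal_of_nat_eq_real_of_nat ennreal_mult'[symmetric])
  also have "of_nat l * (1 * c) = ennreal (real l) * c"
    by (simp add: ennreal_of_nat_eq_real_of_nat)
  also have "ennreal (real l) * c = ennreal (real l * \<beta> * heat_kernel T (0::'a)) * (\<integral>\<^sup>+y. ennreal (U y) \<partial>lborel)"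
    using \<beta> by (simp add: c_def ennreal_mult heat_kernel_nonneg mult_ac)
  finally show ?thesis
    unfolding T_def .
qed

lemma polymer_series_le:
  fixes W :: "real \<Rightarrow> 'a::euclidean_space \<Rightarrow> 'a \<Rightarrow> (real \<Rightarrow> 'a) measure"
    and U :: "'a \<Rightarrow> real" and \<omega> :: "real \<Rightarrow> 'a"
  assumes dim: "DIM('a) \<ge> 3" and W: "is_wiener_family W" and \<beta>: "\<beta> > 0"
    and z: "0 < z" and \<epsilon>: "\<epsilon> = 1 \<or> \<epsilon> = -1"
    and U_nonneg: "\<And>x. U x \<ge> 0" and U_int: "integrable lborel U"
    and \<omega>: "\<omega> \<in> borel_measurable borel"
    and bound: "\<beta> / (2 * pi * \<beta>) powr (real DIM('a) / 2) * (\<integral>x. U x \<partial>lborel)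
                 * (\<Sum>l. (real (Suc l)) powr (- real DIM('a) / 2)) \<le> b"
  shows "(\<Sum>k. let l' = Suc k in \<integral>\<^sup>+ x'. indicator \<Lambda> x' *
              (\<integral>\<^sup>+ \<omega>'. ennreal (\<bar>z ^ l' * \<epsilon> ^ (l' + 1) / real l'\<bar>
                     * chi \<Lambda> (real l' * \<beta>) \<omega>' * self_factor \<beta> U l' \<omega>'
                     * \<bar>zeta \<beta> U l \<omega> l' \<omega>'\<bar> * exp ((- ln z) * real l'))
                 \<partial>(W (real l' * \<beta>) x' x')) \<partial>lborel)
         \<le> ennreal (b * real l)"
    (is "(\<Sum>k. ?term k) \<le> _")
proof -
  define d where "d = real DIM('a)"
  define c where "c = \<beta> / (2 * pi * \<beta>) powr (d / 2) * (\<integral>x. U x \<partial>lborel)"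
  have U: "U \<in> borel_measurable borel"
    using U_int by simp
  have IU: "(\<integral>\<^sup>+y. ennreal (U y) \<partial>lborel) = ennreal (\<integral>x. U x \<partial>lborel)"
    using nn_integral_eq_integral[OF U_int] U_nonneg by simp
  have c: "c \<ge> 0"
    using \<beta> U_nonneg by (simp add: c_def integral_nonneg)
  have summable: "summable (\<lambda>k. real (Suc k) powr (- d / 2))"
    using dim by (subst summable_Suc_iff) (simp add: summable_real_powr_iff d_def)
  have heat: "\<beta> * heat_kernel (real (Suc k) * \<beta>) (0::'a) = \<beta> / (2 * pi * \<beta>) powr (d / 2) * real (Suc k) powr (- d / 2)"
    for k
  proof -
    have "heat_kernel (real (Suc k) * \<beta>) (0::'a) = (real (Suc k) * (2 * pi * \<beta>)) powr (- d / 2)"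
      by (simp add: heat_kernel_zero d_def mult_ac)
    also have "\<dots> = real (Suc k) powr (- d / 2) * (2 * pi * \<beta>) powr (- d / 2)"
      by (rule powr_mult)
    finally show ?thesis
      by (simp add: powr_minus_divide)
  qed
  have "(\<Sum>k. ?term k) \<le> ennreal (\<Sum>k. real l * c * real (Suc k) powr (- d / 2))"
  proof (rule suminf_le_ennreal)
    fix k
    define h where "h = heat_kernel (real (Suc k) * \<beta>) (0::'a)"
    have "real l * \<beta> * h * (\<integral>x. U x \<partial>lborel) = real l * (\<beta> * h) * (\<integral>x. U x \<partial>lborel)"
      by (simp only: mult.assoc)
    also have "\<dots> = real l * c * real (Suc k) powr (- d / 2)"
      unfolding h_def heat by (simp add: c_def mult_ac)
    finally have weight: "real l * \<beta> * h * (\<integral>x. U x \<partial>lborel) = real l * c * real (Suc k) powr (- d / 2)" .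
    have "?term k \<le> ennreal (real l * \<beta> * h) * ennreal (\<integral>x. U x \<partial>lborel)"
      unfolding Let_def IU[symmetric] h_def by (rule polymer_term_le[OF W \<beta> z \<epsilon> U \<omega>]) simp
    also have "\<dots> = ennreal (real l * c * real (Suc k) powr (- d / 2))"
      using \<beta> U_nonneg unfolding weight[symmetric]
      by (subst ennreal_mult) (auto simp: h_def heat_kernel_nonneg integral_nonneg)
    finally show "?term k \<le> ennreal (real l * c * real (Suc k) powr (- d / 2))" .
  qed (use c summable in \<open>auto intro: summable_mult\<close>)
  also have "\<dots> \<le> ennreal (b * real l)"
  proof (rule ennreal_leI)
    have "(\<Sum>k. real l * c * real (Suc k) powr (- d / 2)) = real l * (c * (\<Sum>k. real (Suc k) powr (- d / 2)))"
      using suminf_mult[OF summable, of "real l * c"] by simp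
    also have "\<dots> \<le> real l * b"
      unfolding c_def d_def by (rule mult_left_mono[OF bound]) simp
    finally show "(\<Sum>k. real l * c * real (Suc k) powr (- d / 2)) \<le> b * real l"
      by (simp add: mult.commute)
  qed
  finally show ?thesis .
qed

theorem mainTheorem7:
  fixes W :: "real \<Rightarrow> 'a::euclidean_space \<Rightarrow> 'a \<Rightarrow> (real \<Rightarrow> 'a) measure"
    and \<Lambda> :: "'a set" and \<beta> z \<epsilon> :: real and U :: "'a \<Rightarrow> real"
  assumes dim: "DIM('a) \<ge> 3"
    and W: "is_wiener_family W"
    and \<Lambda>_bdd: "bounded \<Lambda>" and \<Lambda>_meas: "\<Lambda> \<in> sets borel"
    and \<beta>: "\<beta> > 0"
    and z: "0 < z" "z \<le> 1"
    and \<epsilon>: "\<epsilon> = 1 \<or> \<epsilon> = -1"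
    and U_nonneg: "\<And>x. U x \<ge> 0"
    and U_int: "integrable lborel U"
    and U_sym: "\<And>x. U (- x) = U x"
    and cond: "\<beta> / (2 * pi * \<beta>) powr (real DIM('a) / 2) * (\<integral>x. U x \<partial>lborel)
                 * (\<Sum>l. (real (Suc l)) powr (- real DIM('a) / 2)) \<le> - ln z"
  shows "\<forall>l x \<omega>. l \<ge> 1 \<longrightarrow> x \<in> \<Lambda> \<longrightarrow> \<omega> \<in> cpaths (real l * \<beta>) x x \<longrightarrow>
           (\<Sum>k. let l' = Suc k in \<integral>\<^sup>+ x'. indicator \<Lambda> x' *
              (\<integral>\<^sup>+ \<omega>'. ennreal (\<bar>z ^ l' * \<epsilon> ^ (l' + 1) / real l'\<bar>
                     * chi \<Lambda> (real l' * \<beta>) \<omega>' * self_factor \<beta> U l' \<omega>'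
                     * \<bar>zeta \<beta> U l \<omega> l' \<omega>'\<bar> * exp ((- ln z) * real l'))
                 \<partial>(W (real l' * \<beta>) x' x')) \<partial>lborel)
           \<le> ennreal ((- ln z) * real l)"
proof -
  have "\<omega> \<in> borel_measurable borel" if "\<omega> \<in> cpaths (real l * \<beta>) x x" for l x and \<omega> :: "real \<Rightarrow> 'a"
    using cpaths_continuous[OF that] \<beta> by (intro borel_measurable_continuous_onI) simp
  then show ?thesis
    using polymer_series_le[OF dim W \<beta> z(1) \<epsilon> U_nonneg U_int _ cond] by blast
qed

end
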